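(* Let $t\geq 2$ be an integer, $m=4t+2$, $n=2^m+1$ and $\delta_2=2^{4t-1}+\frac{2^{4t}-1}{5}$. If $x$ is an odd integer with $\delta_2+2\leq x\leq\delta_2+3\cdot 2^{4t-5}$, then $x$ is not a coset leader modulo $n$.
   Context: For $n=2^m+1$ and an integer $x$, the 2-cyclotomic coset of $x$ modulo $n$ is $C_x=\{x\cdot 2^{j} \bmod n : j\geq 0\}\subseteq\{0,1,\dots,n-1\}$. For $0\leq x\leq n-1$, "$x$ is a coset leader" means that $x$ is the smallest element of $C_x$. *)

theory Defs
  imports Main
begin

definition cyc_coset :: "nat \<Rightarrow> nat \<Rightarrow> nat set" where
  "cyc_coset n x = {(x * 2 ^ j) mod n | j. True}"

definition coset_leader :: "nat \<Rightarrow> nat \<Rightarrow> bool" where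
  "coset_leader n x \<longleftrightarrow> x < n \<and> (\<forall>y\<in>cyc_coset n x. x \<le> y)"

end

theory Submission
  imports Defs
begin

text \<open>Let \<open>n = 2^m + 1\<close> with \<open>m = 4k + 2\<close>, and suppose \<open>7n/40 < x < n/5\<close>. If \<open>x\<close> were a
  coset leader, then every element \<open>x 2^j mod n\<close> of its coset would lie in \<open>[x, n - x]\<close>,
  because \<open>2^m \<equiv> -1\<close> pairs each element \<open>y\<close> with \<open>n - y\<close>. Since \<open>16x > 2.8 n\<close>, multiplying a
  residue from one of the outer fifths \<open>[x, n/5]\<close>, \<open>[4n/5, n - x]\<close> by 16 gives a number in
  \<open>(2.8n, 3.2n]\<close> or \<open>[12.8n, 13.2n)\<close>, whose residue is again in an outer fifth. Hence
  \<open>x 2^(4k) mod n\<close> lies in an outer fifth, and \<open>x 2^m mod n\<close>, four times it modulo \<open>n\<close>, lies in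
  \<open>(0.7n, 0.8n]\<close> or \<open>[0.2n, 0.3n)\<close>, whereas it equals \<open>n - x > 0.8n\<close>.\<close>

definition outer_fifths :: "nat \<Rightarrow> nat \<Rightarrow> nat \<Rightarrow> bool" where
  "outer_fifths n x y \<longleftrightarrow> (x \<le> y \<and> 5*y \<le> n) \<or> (4*n \<le> 5*y \<and> y + x \<le> n)"

lemma mod_add_mod_eq_modulus:
  fixes a b n :: nat
  assumes "n dvd a + b" "0 < a mod n" "0 < b mod n"
  shows "a mod n + b mod n = n"
proof -
  have "n dvd a mod n + b mod n"
    using assms(1) by (simp add: dvd_eq_mod_eq_0 mod_add_eq)
  then obtain c where c: "a mod n + b mod n = n * c" by blast
  have "n > 0" using assms(1,2) by (cases "n = 0") auto
  then have "a mod n + b mod n < n * 2"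
    using mod_less_divisor[of n a] mod_less_divisor[of n b] by linarith
  with c have "c < 2" by (metis mult_less_cancel1)
  moreover have "c \<noteq> 0" using c assms(2) by (metis add_is_0 mult_0_right not_gr0)
  ultimately show ?thesis using c by (simp add: numeral_2_eq_2 less_Suc_eq)
qed

lemma coset_leader_le_residue:
  assumes "coset_leader n x"
  shows "x \<le> x * 2^j mod n"
proof -
  have "x * 2^j mod n \<in> cyc_coset n x" unfolding cyc_coset_def by blast
  then show ?thesis using assms unfolding coset_leader_def by blast
qed

lemma coset_leader_residue_complement:
  assumes "coset_leader (2^m + 1) x" "0 < x"
  shows "x * 2^j mod (2^m + 1) + x * 2^(j + m) mod (2^m + 1) = 2^m + 1"
proof (rule mod_add_mod_eq_modulus)
  have "x * 2^j + x * 2^(j + m) = (2^m + 1) * (x * 2^j)"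
    by (simp add: power_add algebra_simps del: mult_cancel_left)
  then show "2^m + 1 dvd x * 2^j + x * 2^(j + m)" by (metis dvd_triv_left)
  show "0 < x * 2^j mod (2^m + 1)" "0 < x * 2^(j + m) mod (2^m + 1)"
    using coset_leader_le_residue[OF assms(1)] assms(2) by (auto intro: less_le_trans)
qed

lemma outer_fifths_mult_16_mod:
  fixes n x y :: nat
  assumes "7*n < 40*x" "outer_fifths n x y"
    and "x \<le> 16*y mod n" "16*y mod n + x \<le> n"
  shows "outer_fifths n x (16*y mod n)"
proof (rule ccontr)
  define z where "z = 16*y mod n"
  define a where "a = 16*y div n"
  have quot: "16*y = a*n + z" unfolding a_def z_def by simp
  assume "\<not> outer_fifths n x (16*y mod n)"
  then have middle: "n < 5*z" "5*z < 4*n"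
    using assms(3,4) unfolding outer_fifths_def z_def by auto
  \<comment> \<open>\<open>16y\<close> lies in \<open>(2.8n, 3.2n]\<close> or \<open>[12.8n, 13.2n)\<close>, so \<open>a\<close> is 2 or 3, resp. 12 or 13\<close>
  consider "x \<le> y" "5*y \<le> n" | "4*n \<le> 5*y" "y + x \<le> n"
    using assms(2) unfolding outer_fifths_def by blast
  then show False
  proof cases
    case 1
    show False
    proof (cases "a \<le> 2")
      case True
      then have "a*n \<le> 2*n" by simp
      then show False using quot middle 1 assms(1) by linarith
    next
      case False
      then have "3*n \<le> a*n" by simp
      then show False using quot middle 1 by linarith
    qed
  next
    case 2
    show False
    proof (cases "a \<le> 12")
      case True
      then have "a*n \<le> 12*n" by simp
      then show False using quot middle 2 by linarith
    next
      case False
      then have "13*n \<le> a*n" by simp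
      then show False using quot middle 2 assms(1) by linarith
    qed
  qed
qed

lemma outer_fifths_mult_4_mod_ne:
  fixes n x y :: nat
  assumes "0 < x" "5*x < n" "outer_fifths n x y"
  shows "4*y mod n \<noteq> n - x"
proof
  assume eq: "4*y mod n = n - x"
  define b where "b = 4*y div n"
  have quot: "4*y = b*n + (n - x)" unfolding b_def using eq by (metis div_mult_mod_eq)
  show False
  proof (cases "b \<le> 2")
    case True
    then have "b*n \<le> 2*n" by simp
    then show False using quot assms unfolding outer_fifths_def by linarith
  next
    case False
    then have "3*n \<le> b*n" by simp
    then show False using quot assms unfolding outer_fifths_def by linarith
  qed
qed

theorem not_coset_leader_if_between_fifths:
  fixes k x :: nat
  defines "n \<equiv> 2^(4*k + 2) + 1"
  assumes "7*n < 40*x" "5*x < n"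
  shows "\<not> coset_leader n x"
proof
  assume leader: "coset_leader n x"
  define R where "R j = x * 2^j mod n" for j
  have "0 < x" using assms(2) by (cases "x = 0") auto
  have complement: "R j + R (j + (4*k + 2)) = n" for j
    using coset_leader_residue_complement[of "4*k + 2" x j] leader \<open>0 < x\<close>
    unfolding R_def n_def by simp
  have lower: "x \<le> R j" for j
    using coset_leader_le_residue[OF leader] unfolding R_def .
  have upper: "R j + x \<le> n" for j
    using complement[of j] lower[of "j + (4*k + 2)"] by linarith
  have times: "R (j + i) = 2^i * R j mod n" for i j
    unfolding R_def by (simp add: power_add mod_mult_right_eq algebra_simps)
  have outer: "outer_fifths n x (R (4*i))" for i
  proof (induction i)
    case 0
    have "R 0 = x" unfolding R_def using assms(3) by simp
    then show ?case using assms(3) unfolding outer_fifths_def by simp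
  next
    case (Suc i)
    have "R (4 * Suc i) = R (4*i + 4)" by (simp add: add.commute)
    also have "\<dots> = 16 * R (4*i) mod n" using times[of "4*i" 4] by simp
    finally have step: "R (4 * Suc i) = 16 * R (4*i) mod n" .
    show ?case
      using outer_fifths_mult_16_mod[OF assms(2) Suc.IH]
        lower[of "4 * Suc i"] upper[of "4 * Suc i"] unfolding step by blast
  qed
  have "R 0 = x" unfolding R_def using assms(3) by simp
  then have "R (4*k + 2) = n - x" using complement[of 0] by simp
  moreover have "R (4*k + 2) = 4 * R (4*k) mod n" using times[of "4*k" 2] by simp
  ultimately show False
    using outer_fifths_mult_4_mod_ne[OF \<open>0 < x\<close> assms(3) outer[of k]] by simp
qed

lemma pow2_4t_mod_5: "(2::nat)^(4*t) mod 5 = 1"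
proof -
  have "(2::nat)^(4*t) = 16^t" by (simp add: power_mult)
  also have "16^t mod 5 = (16 mod 5)^t mod (5::nat)" by (rule power_mod[symmetric])
  finally show ?thesis by simp
qed

theorem lemma4p3:
  fixes t x :: nat
  assumes "t \<ge> 2"
    and "odd x"
    and "2 ^ (4*t - 1) + (2 ^ (4*t) - 1) div 5 + 2 \<le> x"
    and "x \<le> 2 ^ (4*t - 1) + (2 ^ (4*t) - 1) div 5 + 3 * 2 ^ (4*t - 5)"
  shows "\<not> coset_leader (2 ^ (4*t + 2) + 1) x"
proof (rule not_coset_leader_if_between_fifths)
  define g :: nat where "g = 2^(4*t - 5)"
  obtain s where "t = s + 2" using assms(1) by (metis add.commute le_Suc_ex)
  then have g: "(2::nat)^(4*t - 1) = 16*g" "(2::nat)^(4*t) = 32*g" "(2::nat)^(4*t + 2) = 128*g"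
    unfolding g_def by (simp_all add: power_add)
  have "0 < g" unfolding g_def by simp
  define q where "q = (2^(4*t) - 1) div (5::nat)"
  have "32*g mod 5 = 1" using pow2_4t_mod_5[of t] g(2) by simp
  then have "32*g - 1 = 5 * (32*g div 5)" using minus_mod_eq_mult_div[of "32*g" 5] by simp
  then have "5*q + 1 = 32*g" unfolding q_def g(2) using \<open>0 < g\<close> by simp
  moreover have "16*g + q + 2 \<le> x" "x \<le> 16*g + q + 3*g"
    using assms(3,4) unfolding g(1) q_def g_def[symmetric] .
  ultimately have "896*g + 7 < 40*x" "5*x < 128*g + 1" by linarith+
  then show "7 * (2^(4*t + 2) + 1) < 40*x" "5*x < 2^(4*t + 2) + 1" unfolding g(3) by simp_all
qed

end
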